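(* Interpret programs in the Boolean semiring. For every program $C$ and all $P,Q\subseteq\Sigma$, the following are equivalent: (i) $\vDash\{\mathbf 1P\}\ C\ \{\Diamond Q\}$; (ii) $P\subseteq\langle C\rangle Q$; (iii) the Lisbon triple for $P$, $C$, $Q$ is valid.
   Context: Boolean semiring: $U=\{0,1\}$ with $+=\vee$, $\cdot=\wedge$, $\mathbf 0=0$, $\mathbf 1=1$. Weighting functions $\mathcal W(X)$ are maps $m:X\to\{0,1\}$ with countable support $\mathrm{supp}(m)=\{x:m(x)=1\}$, mass $|m|=\bigvee_{x\in\mathrm{supp}(m)}m(x)$, pointwise operations; $\eta(x)$ is the indicator of $\{x\}$ and $f^\dagger(m)(y)=\bigvee_{x\in\mathrm{supp}(m)}m(x)\wedge f(x)(y)$. Fix states $\Sigma$, atomic actions $\mathsf{Act}$ with $[\![a]\!]_{\mathsf{Act}}:\Sigma\to\mathcal W(\Sigma)$, primitive tests $\mathsf{Test}\subseteq 2^\Sigma$. Programs $C::=\mathsf{skip}\mid C_1;C_2\mid C_1+C_2\mid\mathsf{assume}\ e\mid C^{\langle e,e'\rangle}\mid a$, $e::=b\mid u$ ($u\in\{0,1\}$), tests $b$ Boolean combinations of $\mathsf{true},\mathsf{false}$ and primitive tests $t$ (with $[\![t]\!](\sigma)=1$ iff $\sigma\in t$), $[\![u]\!](\sigma)=u$. Semantics: $[\![\mathsf{skip}]\!](\sigma)=\eta(\sigma)$; $[\![C_1;C_2]\!](\sigma)=[\![C_2]\!]^\dagger([\![C_1]\!](\sigma))$; $[\![C_1+C_2]\!](\sigma)=[\![C_1]\!](\sigma)+[\![C_2]\!](\sigma)$;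 $[\![a]\!]=[\![a]\!]_{\mathsf{Act}}$; $[\![\mathsf{assume}\ e]\!](\sigma)=[\![e]\!](\sigma)\cdot\eta(\sigma)$; $[\![C^{\langle e,e'\rangle}]\!]$ is the least fixed point (pointwise order) of $\Phi(f)(\sigma)=[\![e]\!](\sigma)\cdot f^\dagger([\![C]\!](\sigma))+[\![e']\!](\sigma)\cdot\eta(\sigma)$. Assertions are subsets of $\mathcal W(\Sigma)$; $\vDash\{\varphi\}C\{\psi\}$ iff $[\![C]\!]^\dagger(m)\in\psi$ for all $m\in\varphi$. For $P\subseteq\Sigma$: $\mathbf 1P=\{m:|m|=\mathbf 1,\ \mathrm{supp}(m)\subseteq P\}$ and $\Diamond Q=\{m:\mathrm{supp}(m)\cap Q\ne\emptyset\}$. $\langle C\rangle Q=\{\sigma\in\Sigma:\mathrm{supp}([\![C]\!](\sigma))\cap Q\neq\emptyset\}$. The Lisbon triple for $P,C,Q$ is valid iff for every $\sigma\in P$ there exists $\tau\in\mathrm{supp}([\![C]\!](\sigma))$ with $\tau\in Q$. *)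

theory Defs
  imports "HOL-Library.Countable_Set"
begin

type_synonym 'x weighting = "'x \<Rightarrow> bool"

definition supp :: "'x weighting \<Rightarrow> 'x set" where
  "supp m = {x. m x}"

definition Weightings :: "'x weighting set" where
  "Weightings = {m. countable (supp m)}"

definition mass :: "'x weighting \<Rightarrow> bool" where
  "mass m = (\<exists>x\<in>supp m. m x)"

definition eta :: "'x \<Rightarrow> 'x weighting" where
  "eta x = (\<lambda>y. y = x)"

definition bind :: "('x \<Rightarrow> 'y weighting) \<Rightarrow> 'x weighting \<Rightarrow> 'y weighting" where
  "bind f m = (\<lambda>y. \<exists>x\<in>supp m. m x \<and> f x y)"

definition wplus :: "'x weighting \<Rightarrow> 'x weighting \<Rightarrow> 'x weighting" where
  "wplus m1 m2 = (\<lambda>x. m1 x \<or> m2 x)"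

definition wscale :: "bool \<Rightarrow> 'x weighting \<Rightarrow> 'x weighting" where
  "wscale u m = (\<lambda>x. u \<and> m x)"

text \<open>Primitive tests are given by names of type 't, interpreted by a map
  test :: 't \<Rightarrow> 's set (so Test = range test); atomic actions have names of type 'a.\<close>

datatype 't bexp = BTrue | BFalse | BPrim 't | BNot "'t bexp"
  | BAnd "'t bexp" "'t bexp" | BOr "'t bexp" "'t bexp"

datatype 't expr = ETest "'t bexp" | EConst bool

datatype ('a, 't) prog =
    Skip
  | Seq "('a, 't) prog" "('a, 't) prog"
  | Choice "('a, 't) prog" "('a, 't) prog"
  | Assume "'t expr"
  | Loop "('a, 't) prog" "'t expr" "'t expr"
  | Atom 'a

primrec beval :: "('t \<Rightarrow> 's set) \<Rightarrow> 't bexp \<Rightarrow> 's \<Rightarrow> bool" where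
  "beval test BTrue \<sigma> = True"
| "beval test BFalse \<sigma> = False"
| "beval test (BPrim t) \<sigma> = (\<sigma> \<in> test t)"
| "beval test (BNot b) \<sigma> = (\<not> beval test b \<sigma>)"
| "beval test (BAnd b1 b2) \<sigma> = (beval test b1 \<sigma> \<and> beval test b2 \<sigma>)"
| "beval test (BOr b1 b2) \<sigma> = (beval test b1 \<sigma> \<or> beval test b2 \<sigma>)"

primrec eeval :: "('t \<Rightarrow> 's set) \<Rightarrow> 't expr \<Rightarrow> 's \<Rightarrow> bool" where
  "eeval test (ETest b) \<sigma> = beval test b \<sigma>"
| "eeval test (EConst u) \<sigma> = u"

primrec sem :: "('a \<Rightarrow> 's \<Rightarrow> 's weighting) \<Rightarrow> ('t \<Rightarrow> 's set) \<Rightarrow> ('a, 't) prog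
                 \<Rightarrow> 's \<Rightarrow> 's weighting" where
  "sem act test Skip = eta"
| "sem act test (Seq C1 C2) = (\<lambda>\<sigma>. bind (sem act test C2) (sem act test C1 \<sigma>))"
| "sem act test (Choice C1 C2) = (\<lambda>\<sigma>. wplus (sem act test C1 \<sigma>) (sem act test C2 \<sigma>))"
| "sem act test (Assume e) = (\<lambda>\<sigma>. wscale (eeval test e \<sigma>) (eta \<sigma>))"
| "sem act test (Loop C e e') =
     lfp (\<lambda>f \<sigma>. wplus (wscale (eeval test e \<sigma>) (bind f (sem act test C \<sigma>)))
                       (wscale (eeval test e' \<sigma>) (eta \<sigma>)))"
| "sem act test (Atom a) = act a"

definition hoare_valid ::
  "('a \<Rightarrow> 's \<Rightarrow> 's weighting) \<Rightarrow> ('t \<Rightarrow> 's set) \<Rightarrow> 's weighting set \<Rightarrow> ('a, 't) prog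
     \<Rightarrow> 's weighting set \<Rightarrow> bool" where
  "hoare_valid act test \<phi> C \<psi> = (\<forall>m\<in>\<phi>. bind (sem act test C) m \<in> \<psi>)"

definition oneP :: "'s set \<Rightarrow> 's weighting set" where
  "oneP P = {m \<in> Weightings. mass m = True \<and> supp m \<subseteq> P}"

definition Diamond :: "'s set \<Rightarrow> 's weighting set" where
  "Diamond Q = {m \<in> Weightings. supp m \<inter> Q \<noteq> {}}"

definition diamond_pre ::
  "('a \<Rightarrow> 's \<Rightarrow> 's weighting) \<Rightarrow> ('t \<Rightarrow> 's set) \<Rightarrow> ('a, 't) prog \<Rightarrow> 's set \<Rightarrow> 's set" where
  "diamond_pre act test C Q = {\<sigma>. supp (sem act test C \<sigma>) \<inter> Q \<noteq> {}}"

definition lisbon_valid ::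
  "('a \<Rightarrow> 's \<Rightarrow> 's weighting) \<Rightarrow> ('t \<Rightarrow> 's set) \<Rightarrow> 's set \<Rightarrow> ('a, 't) prog \<Rightarrow> 's set \<Rightarrow> bool" where
  "lisbon_valid act test P C Q = (\<forall>\<sigma>\<in>P. \<exists>\<tau>\<in>supp (sem act test C \<sigma>). \<tau> \<in> Q)"

end

theory Submission
  imports Defs
begin

text \<open>Over the Boolean semiring weights carry no information beyond the support, and
  the support of bind f m is the union of the supports of f x over the support of m.
  Point masses eta \<sigma> with \<sigma> \<in> P lie in oneP P, which gives (i) \<Longrightarrow> (ii);
  conversely every m \<in> oneP P has a support point in P, whose successors meet Q.
  The only subtlety is that the output of the Hoare triple must again be a weighting,
  i.e. have countable support. This holds because every program denotation has countable
  supports: the support of a loop lies in the set of states reachable along the support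
  relation of its body, a countable union of countable sets.\<close>

lemma supp_eta [simp]: "supp (eta x) = {x}"
  by (auto simp: supp_def eta_def)

lemma supp_bind: "supp (bind f m) = (\<Union>x\<in>supp m. supp (f x))"
  by (auto simp: supp_def bind_def)

lemma supp_wplus [simp]: "supp (wplus m1 m2) = supp m1 \<union> supp m2"
  by (auto simp: supp_def wplus_def)

lemma supp_wscale [simp]: "supp (wscale u m) = (if u then supp m else {})"
  by (auto simp: supp_def wscale_def)

lemma bind_eta_left [simp]: "bind f (eta x) = f x"
  by (auto simp: bind_def supp_def eta_def)

lemma countable_supp_bind:
  assumes "countable (supp m)" and "\<And>x. countable (supp (f x))"
  shows "countable (supp (bind f m))"
  using assms by (simp add: supp_bind)

lemma countable_rtrancl_Image:
  assumes "\<And>x. countable (R `` {x})"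
  shows "countable (R\<^sup>* `` {s})"
proof -
  have "countable ((R ^^ n) `` {s})" for n
  proof (induction n)
    case (Suc n)
    have "(R ^^ Suc n) `` {s} = (\<Union>x\<in>(R ^^ n) `` {s}. R `` {x})"
      by auto
    then show ?case using Suc assms by simp
  qed simp
  moreover have "R\<^sup>* `` {s} = (\<Union>n. (R ^^ n) `` {s})"
    by (auto simp: rtrancl_power)
  ultimately show ?thesis by simp
qed

lemma supp_sem_Loop_subset:
  "supp (sem act test (Loop C e e') \<sigma>) \<subseteq> {(x, y). y \<in> supp (sem act test C x)}\<^sup>* `` {\<sigma>}"
proof -
  let ?R = "{(x, y). y \<in> supp (sem act test C x)}"
  define reach where "reach = (\<lambda>s y. y \<in> ?R\<^sup>* `` {s})"
  have "(\<lambda>f \<sigma>. wplus (wscale (eeval test e \<sigma>) (bind f (sem act test C \<sigma>)))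
                    (wscale (eeval test e' \<sigma>) (eta \<sigma>))) reach \<le> reach"
    unfolding reach_def
    by (auto simp: le_fun_def wplus_def wscale_def bind_def eta_def supp_def
        intro: converse_rtrancl_into_rtrancl)
  then have "sem act test (Loop C e e') \<le> reach"
    by (simp add: lfp_lowerbound)
  then show ?thesis
    by (auto simp: le_fun_def reach_def supp_def)
qed

lemma countable_supp_sem:
  assumes "\<And>a \<sigma>. act a \<sigma> \<in> Weightings"
  shows "countable (supp (sem act test C \<sigma>))"
proof (induction C arbitrary: \<sigma>)
  case (Seq C1 C2)
  then show ?case by (simp add: countable_supp_bind)
next
  case (Loop C e e')
  then have "countable ({(x, y). y \<in> supp (sem act test C x)}\<^sup>* `` {\<sigma>})"
    by (intro countable_rtrancl_Image) (simp add: Image_def)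
  then show ?case
    by (rule countable_subset[OF supp_sem_Loop_subset])
next
  case (Atom a)
  then show ?case using assms by (simp add: Weightings_def)
qed simp_all

lemma bind_oneP_Diamond_iff:
  assumes "\<And>\<sigma>. countable (supp (f \<sigma>))"
  shows "(\<forall>m\<in>oneP P. bind f m \<in> Diamond Q) \<longleftrightarrow> (\<forall>\<sigma>\<in>P. supp (f \<sigma>) \<inter> Q \<noteq> {})"
proof
  assume "\<forall>m\<in>oneP P. bind f m \<in> Diamond Q"
  moreover have "eta \<sigma> \<in> oneP P" if "\<sigma> \<in> P" for \<sigma>
    using that by (simp add: oneP_def Weightings_def mass_def) (simp add: eta_def)
  ultimately show "\<forall>\<sigma>\<in>P. supp (f \<sigma>) \<inter> Q \<noteq> {}"
    by (fastforce simp: Diamond_def)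
next
  assume hits: "\<forall>\<sigma>\<in>P. supp (f \<sigma>) \<inter> Q \<noteq> {}"
  show "\<forall>m\<in>oneP P. bind f m \<in> Diamond Q"
  proof
    fix m assume m: "m \<in> oneP P"
    then obtain x where "x \<in> supp m" "x \<in> P"
      by (auto simp: oneP_def mass_def)
    with hits have "supp (bind f m) \<inter> Q \<noteq> {}"
      by (auto simp: supp_bind)
    moreover have "countable (supp (bind f m))"
      using m assms by (intro countable_supp_bind) (auto simp: oneP_def Weightings_def)
    ultimately show "bind f m \<in> Diamond Q"
      by (simp add: Diamond_def Weightings_def)
  qed
qed

lemma subset_diamond_pre_iff_lisbon_valid:
  "P \<subseteq> diamond_pre act test C Q \<longleftrightarrow> lisbon_valid act test P C Q"
  by (auto simp: lisbon_valid_def diamond_pre_def)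

theorem theorem5p2:
  fixes act :: "'a \<Rightarrow> 's \<Rightarrow> 's weighting"
    and test :: "'t \<Rightarrow> 's set"
    and C :: "('a, 't) prog"
    and P Q :: "'s set"
  assumes act_W: "\<And>a \<sigma>. act a \<sigma> \<in> Weightings"
  shows "(hoare_valid act test (oneP P) C (Diamond Q) \<longleftrightarrow> P \<subseteq> diamond_pre act test C Q)
       \<and> (P \<subseteq> diamond_pre act test C Q \<longleftrightarrow> lisbon_valid act test P C Q)"
proof
  have "hoare_valid act test (oneP P) C (Diamond Q)
          \<longleftrightarrow> (\<forall>\<sigma>\<in>P. supp (sem act test C \<sigma>) \<inter> Q \<noteq> {})"
    unfolding hoare_valid_def by (rule bind_oneP_Diamond_iff[OF countable_supp_sem[OF act_W]])
  then show "hoare_valid act test (oneP P) C (Diamond Q) \<longleftrightarrow> P \<subseteq> diamond_pre act test C Q"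
    by (auto simp: diamond_pre_def)
qed (rule subset_diamond_pre_iff_lisbon_valid)

end
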